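(* Let $u\ge1$ be an integer, $H$ a graph containing $K_u$, and $\mathcal{F}$ a set of connected graphs none of which is a subgraph of $K_u$. Suppose there is an $\mathcal{F}$-free graph $L$ with $k^u(L)\ge1$, $\mathcal{N}(H,L)\ge1$, and $\rho_u(H,L)=P_u(H,\mathcal{F})$. For each $p\ge1$ write $p=q\,k^u(L)+r$ with integers $q\ge0$, $0\le r<k^u(L)$. Then \[ \lim_{p\to\infty}\frac{\mathrm{ex}_u(p,H,\mathcal{F})}{\mathcal{N}(H,qL\cup rK_u)}=1\quad\text{and}\quad \lim_{p\to\infty}\frac{\mathrm{ex}_u(p,H,\mathcal{F})}{\frac{\mathcal{N}(H,L)}{k^u(L)}\,p}=1 . \] Moreover, whenever $k^u(L)$ divides $p$, $\mathrm{ex}_u(p,H,\mathcal{F})=\mathcal{N}\big(H,\frac{p}{k^u(L)}L\big)$.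
   Context: All graphs are finite and simple. $\mathcal{N}(H,G)$ is the number of (not necessarily induced) subgraphs of $G$ isomorphic to $H$; $k^u(G)=\mathcal{N}(K_u,G)$. A graph is $\mathcal{F}$-free if it has no subgraph isomorphic to a member of $\mathcal{F}$. $\mathrm{ex}_u(p,H,\mathcal{F})\in[0,\infty]$ is the supremum of $\mathcal{N}(H,G)$ over all $\mathcal{F}$-free graphs $G$ with $k^u(G)=p$. $\rho_u(H,G)=\mathcal{N}(H,G)/k^u(G)$. $P_u(H,\mathcal{F})=\lim_{p\to\infty}\mathrm{ex}_u(p,H,\mathcal{F})/p$ (this limit exists in $[0,\infty]$ under the stated hypotheses). $qL\cup rK_u$ denotes the disjoint union of $q$ copies of $L$ and $r$ copies of $K_u$. *)

theory Defs
  imports "HOL-Analysis.Analysis" "HOL-Library.Extended_Nat" "HOL-Library.Extended_Real"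
begin

text \<open>Finite simple graphs with vertices in nat: a pair (V, E) of a vertex set and a set
  of 2-element edges contained in V.\<close>
type_synonym graph = "nat set \<times> nat set set"

definition wf_graph :: "graph \<Rightarrow> bool" where
  "wf_graph G \<longleftrightarrow> finite (fst G) \<and> (\<forall>e\<in>snd G. e \<subseteq> fst G \<and> card e = 2)"

definition subgraph :: "graph \<Rightarrow> graph \<Rightarrow> bool" where
  "subgraph S G \<longleftrightarrow> wf_graph S \<and> fst S \<subseteq> fst G \<and> snd S \<subseteq> snd G"

definition graph_iso :: "graph \<Rightarrow> graph \<Rightarrow> bool" where
  "graph_iso G1 G2 \<longleftrightarrow> (\<exists>f. bij_betw f (fst G1) (fst G2) \<and>
     (\<forall>x\<in>fst G1. \<forall>y\<in>fst G1. {x, y} \<in> snd G1 \<longleftrightarrow> {f x, f y} \<in> snd G2))"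

text \<open>N(H,G): number of (not necessarily induced) subgraphs of G isomorphic to H.\<close>
definition numsub :: "graph \<Rightarrow> graph \<Rightarrow> nat" where
  "numsub H G = card {S. subgraph S G \<and> graph_iso S H}"

definition complete :: "nat \<Rightarrow> graph" where
  "complete u = ({0..<u}, {e. e \<subseteq> {0..<u} \<and> card e = 2})"

definition kcount :: "nat \<Rightarrow> graph \<Rightarrow> nat" where
  "kcount u G = numsub (complete u) G"

definition rho :: "nat \<Rightarrow> graph \<Rightarrow> graph \<Rightarrow> real" where
  "rho u H G = real (numsub H G) / real (kcount u G)"

definition free :: "graph set \<Rightarrow> graph \<Rightarrow> bool" where
  "free \<F> G \<longleftrightarrow> (\<forall>F\<in>\<F>. numsub F G = 0)"

definition connected_graph :: "graph \<Rightarrow> bool" where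
  "connected_graph G \<longleftrightarrow> wf_graph G \<and> fst G \<noteq> {} \<and>
     (\<forall>x\<in>fst G. \<forall>y\<in>fst G. (\<lambda>a b. {a, b} \<in> snd G)\<^sup>*\<^sup>* x y)"

text \<open>ex_u(p,H,F) in [0,\<infinity>]: supremum over F-free graphs G with k^u(G) = p (Sup {} = 0).
  Every finite graph is isomorphic to one on nat vertices, so ranging over graphs on nat
  loses nothing.\<close>
definition ex_u :: "nat \<Rightarrow> nat \<Rightarrow> graph \<Rightarrow> graph set \<Rightarrow> enat" where
  "ex_u u p H \<F> = Sup {enat (numsub H G) | G. wf_graph G \<and> free \<F> G \<and> kcount u G = p}"

definition P_u :: "nat \<Rightarrow> graph \<Rightarrow> graph set \<Rightarrow> ereal" where
  "P_u u H \<F> = lim (\<lambda>p. ereal_of_enat (ex_u u p H \<F>) / ereal (real p))"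

definition gmap :: "(nat \<Rightarrow> nat) \<Rightarrow> graph \<Rightarrow> graph" where
  "gmap f G = (f ` fst G, (\<lambda>e. f ` e) ` snd G)"

definition gunion :: "graph \<Rightarrow> graph \<Rightarrow> graph" where
  "gunion G1 G2 = (let A = gmap (\<lambda>v. 2 * v) G1; B = gmap (\<lambda>v. 2 * v + 1) G2
                   in (fst A \<union> fst B, snd A \<union> snd B))"

primrec copies :: "nat \<Rightarrow> graph \<Rightarrow> graph" where
  "copies 0 G = ({}, {})"
| "copies (Suc q) G = gunion G (copies q G)"

definition mixed :: "nat \<Rightarrow> graph \<Rightarrow> nat \<Rightarrow> nat \<Rightarrow> graph" where
  "mixed q L r u = gunion (copies q L) (copies r (complete u))"

end

(*
  K_u and every member of \<F> are connected, so each of their copies in a disjoint union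
  lies in one summand: k^u and \<F>-freeness are additive over disjoint unions, while
  N(H, -) is superadditive. Padding \<lfloor>p/n\<rfloor> disjoint copies of an \<F>-free graph G
  with n = k^u(G) by p mod n copies of K_u gives an \<F>-free graph with exactly p copies of
  K_u, so liminf ex_u(p)/p \<ge> N(H,G)/n; hence ex_u(p)/p converges to its supremum, which
  is therefore P_u, and N(H,G) \<le> P_u k^u(G) for every \<F>-free G.
  For the optimal L and p = q k^u(L) + r, the graph qL \<union> rK_u thus has between
  q N(H,L) \<ge> P_u (p - k^u(L)) and ex_u(p) \<le> P_u p copies of H, which squeezes both ratios
  to 1; when k^u(L) divides p the two bounds coincide.
*)
theory Submission
  imports Defs
begin

section \<open>Limits of ratios\<close>

lemma tendsto_SUP_if_eventually_gt:
  fixes s :: "nat \<Rightarrow> 'a::{complete_linorder, linorder_topology}"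
  assumes "\<And>n a. n \<ge> m \<Longrightarrow> a < s n \<Longrightarrow> eventually (\<lambda>p. a < s p) sequentially"
  shows "s \<longlonglongrightarrow> (SUP n\<in>{m..}. s n)"
proof (rule order_tendstoI)
  fix a assume "(SUP n\<in>{m..}. s n) < a"
  moreover have "eventually (\<lambda>p. s p \<le> (SUP n\<in>{m..}. s n)) sequentially"
    using eventually_ge_at_top[of m] by eventually_elim (auto intro: SUP_upper)
  ultimately show "eventually (\<lambda>p. s p < a) sequentially"
    by (auto elim: eventually_mono)
next
  fix a assume "a < (SUP n\<in>{m..}. s n)"
  then obtain n where "n \<ge> m" "a < s n"
    by (auto simp: less_SUP_iff)
  then show "eventually (\<lambda>p. a < s p) sequentially"
    by (rule assms)
qed

lemma tendsto_of_nat_div_over: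
  assumes "k > 0"
  shows "(\<lambda>p. real (p div k) / real p) \<longlonglongrightarrow> 1 / real k"
proof (rule tendsto_sandwich)
  show "eventually (\<lambda>p. 1 / real k - 1 / real p \<le> real (p div k) / real p) sequentially"
    using eventually_gt_at_top[of 0]
  proof eventually_elim
    case (elim p)
    have "p \<le> p div k * k + k"
      using mod_less_divisor[OF assms, of p] div_mult_mod_eq[of p k] by linarith
    then have "real p \<le> (real (p div k) + 1) * real k"
      by (metis of_nat_add of_nat_le_iff of_nat_mult distrib_right mult_1)
    then have "real p / real k - 1 \<le> real (p div k)"
      using assms by (simp add: field_simps)
    then have "(real p / real k - 1) / real p \<le> real (p div k) / real p"
      using elim by (simp add: divide_right_mono)
    with elim show ?case
      by (simp add: diff_divide_distrib)
  qed
  show "eventually (\<lambda>p. real (p div k) / real p \<le> 1 / real k) sequentially"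
    using eventually_gt_at_top[of 0]
  proof eventually_elim
    case (elim p)
    have "real (p div k) / real p \<le> real p / real k / real p"
      by (rule divide_right_mono[OF of_nat_div_le_of_nat]) simp
    with elim show ?case
      by simp
  qed
  show "(\<lambda>p. 1 / real k - 1 / real p) \<longlonglongrightarrow> 1 / real k"
    using tendsto_diff[OF tendsto_const lim_const_over_n[of 1]] by simp
qed simp

lemma tendsto_ratio_to_linear:
  fixes e :: "nat \<Rightarrow> nat" and k N :: nat
  assumes k: "k \<ge> 1" and N: "N \<ge> 1"
    and bounds: "\<And>p. p \<ge> 1 \<Longrightarrow> p div k * N \<le> e p \<and> real (e p) \<le> real N / real k * real p"
  shows "(\<lambda>p. real (e p) / (real N / real k * real p)) \<longlonglongrightarrow> 1"
proof (rule tendsto_sandwich[OF _ _ _ tendsto_const])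
  show "(\<lambda>p. real k * (real (p div k) / real p)) \<longlonglongrightarrow> 1"
    using tendsto_mult[OF tendsto_const tendsto_of_nat_div_over, of k "real k"] k by simp
  show "eventually (\<lambda>p. real k * (real (p div k) / real p) \<le> real (e p) / (real N / real k * real p))
    sequentially"
    using eventually_ge_at_top[of 1]
  proof eventually_elim
    case (elim p)
    have "real (p div k) * real N \<le> real (e p)"
      using bounds[OF elim] by (metis of_nat_le_iff of_nat_mult)
    with k N elim show ?case
      by (simp add: field_simps)
  qed
  show "eventually (\<lambda>p. real (e p) / (real N / real k * real p) \<le> 1) sequentially"
    using eventually_ge_at_top[of 1]
  proof eventually_elim
    case (elim p)
    have "0 < real N / real k * real p"
      using elim k N by simp
    with bounds[OF elim] show ?case
      by (simp only: divide_le_eq_1_pos)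
  qed
qed

lemma tendsto_ratio_to_lower_bound:
  fixes e M :: "nat \<Rightarrow> nat" and k N :: nat
  assumes k: "k \<ge> 1" and N: "N \<ge> 1"
    and bounds: "\<And>p. p \<ge> 1 \<Longrightarrow> p div k * N \<le> M p \<and> M p \<le> e p \<and> real (e p) \<le> real N / real k * real p"
  shows "(\<lambda>p. real (e p) / real (M p)) \<longlonglongrightarrow> 1"
proof (rule tendsto_sandwich[OF _ _ tendsto_const])
  show "(\<lambda>p. inverse (real k * (real (p div k) / real p))) \<longlonglongrightarrow> 1"
    using tendsto_inverse[OF tendsto_mult[OF tendsto_const tendsto_of_nat_div_over, of k "real k"]] k
    by simp
  have "eventually (\<lambda>p. 1 \<le> real (e p) / real (M p)
    \<and> real (e p) / real (M p) \<le> inverse (real k * (real (p div k) / real p))) sequentially"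
    using eventually_ge_at_top[of k]
  proof eventually_elim
    case (elim p)
    then have p: "p \<ge> 1" and q: "1 \<le> real (p div k)"
      using k div_greater_zero_iff[of p k] by simp_all
    have le: "real (p div k) * real N \<le> real (M p)" "real (M p) \<le> real (e p)"
      using bounds[OF p] by (metis of_nat_le_iff of_nat_mult)+
    have "real N \<le> real (p div k) * real N"
      using mult_right_mono[OF q, of "real N"] by simp
    with le(1) N have M_pos: "0 < real (M p)"
      by linarith
    have "real (e p) / real (M p) \<le> real N / real k * real p / (real (p div k) * real N)"
      using bounds[OF p] le(1) M_pos q N by (intro frac_le) auto
    also have "\<dots> = inverse (real k * (real (p div k) / real p))"
      using k N q p by (simp add: field_simps)
    finally show ?case
      using le(2) M_pos by simp
  qed
  then show "eventually (\<lambda>p. 1 \<le> real (e p) / real (M p)) sequentially"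
    and "eventually (\<lambda>p. real (e p) / real (M p) \<le> inverse (real k * (real (p div k) / real p)))
      sequentially"
    by (auto elim: eventually_mono)
qed

lemma tendsto_ereal_of_enat_divide:
  assumes "eventually (\<lambda>p. x p = enat (e p) \<and> d p \<noteq> 0) sequentially"
    and "(\<lambda>p. real (e p) / d p) \<longlonglongrightarrow> l"
  shows "(\<lambda>p. ereal_of_enat (x p) / ereal (d p)) \<longlonglongrightarrow> ereal l"
proof -
  have "eventually (\<lambda>p. ereal (real (e p) / d p) = ereal_of_enat (x p) / ereal (d p)) sequentially"
    using assms(1) by eventually_elim (simp add: ereal_divide)
  with tendsto_ereal[OF assms(2)] show ?thesis
    by (rule Lim_transform_eventually)
qed

lemma ereal_ratio_limits_of_bounds:
  fixes x :: "nat \<Rightarrow> enat" and M :: "nat \<Rightarrow> nat" and k N :: nat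
  assumes k: "k \<ge> 1" and N: "N \<ge> 1"
    and bounds: "\<And>p. p \<ge> 1 \<Longrightarrow> \<exists>e. x p = enat e \<and> p div k * N \<le> M p \<and> M p \<le> e
      \<and> real e \<le> real N / real k * real p"
  shows "(\<lambda>p. ereal_of_enat (x p) / ereal (real (M p))) \<longlonglongrightarrow> 1"
    and "(\<lambda>p. ereal_of_enat (x p) / ereal (real N / real k * real p)) \<longlonglongrightarrow> 1"
proof -
  define e where "e p = the_enat (x p)" for p
  have x: "x p = enat (e p)"
    and e: "p div k * N \<le> M p \<and> M p \<le> e p \<and> real (e p) \<le> real N / real k * real p"
    if "p \<ge> 1" for p
    using bounds[OF that] by (auto simp: e_def)
  have "eventually (\<lambda>p. x p = enat (e p) \<and> real (M p) \<noteq> 0) sequentially"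
    using eventually_ge_at_top[of k]
  proof eventually_elim
    case (elim p)
    with k have "p \<ge> 1" "p div k \<ge> 1"
      using div_greater_zero_iff[of p k] by simp_all
    then have "M p \<ge> 1"
      using e[of p] N by (metis le_trans mult_le_mono nat_mult_1)
    with x[OF \<open>p \<ge> 1\<close>] show ?case
      by simp
  qed
  from tendsto_ereal_of_enat_divide[OF this tendsto_ratio_to_lower_bound[OF k N e]]
  show "(\<lambda>p. ereal_of_enat (x p) / ereal (real (M p))) \<longlonglongrightarrow> 1"
    by (simp add: one_ereal_def)
  have "eventually (\<lambda>p. x p = enat (e p) \<and> real N / real k * real p \<noteq> 0) sequentially"
    using eventually_ge_at_top[of 1] by eventually_elim (use x k N in simp)
  moreover have "p div k * N \<le> e p \<and> real (e p) \<le> real N / real k * real p" if "p \<ge> 1" for p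
    using e[OF that] by linarith
  ultimately show "(\<lambda>p. ereal_of_enat (x p) / ereal (real N / real k * real p)) \<longlonglongrightarrow> 1"
    using tendsto_ereal_of_enat_divide tendsto_ratio_to_linear[OF k N] by (simp add: one_ereal_def)
qed


section \<open>Disjoint unions of graphs\<close>

definition shift :: "nat \<Rightarrow> nat \<Rightarrow> nat" where
  "shift c v = 2 * v + c"

lemma inj_shift: "inj (shift c)"
  by (auto simp: inj_def shift_def)

lemma shift_mod_2 [simp]: "shift c v mod 2 = c mod 2"
  by (simp add: shift_def)

lemma gunion_shift:
  "gunion G1 G2 = (fst (gmap (shift 0) G1) \<union> fst (gmap (shift 1) G2),
                   snd (gmap (shift 0) G1) \<union> snd (gmap (shift 1) G2))"
proof -
  have "shift 0 = (\<lambda>v. 2 * v)" "shift 1 = (\<lambda>v. 2 * v + 1)"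
    by (auto simp: shift_def)
  then show ?thesis
    by (simp add: gunion_def Let_def)
qed

lemma wf_graph_gmap: "inj h \<Longrightarrow> wf_graph G \<Longrightarrow> wf_graph (gmap h G)"
  unfolding wf_graph_def gmap_def by (auto simp: card_image inj_on_subset)

lemma wf_graph_gunion: "wf_graph G1 \<Longrightarrow> wf_graph G2 \<Longrightarrow> wf_graph (gunion G1 G2)"
  using wf_graph_gmap[OF inj_shift, of G1 0] wf_graph_gmap[OF inj_shift, of G2 1]
  unfolding gunion_shift wf_graph_def by auto

lemma wf_graph_empty: "wf_graph ({}, {})"
  by (simp add: wf_graph_def)

lemma wf_graph_complete: "wf_graph (complete u)"
  by (auto simp: wf_graph_def complete_def)

lemma wf_graph_copies: "wf_graph G \<Longrightarrow> wf_graph (copies q G)"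
  by (induction q) (auto simp: wf_graph_empty wf_graph_gunion)

lemma finite_subgraphs: "wf_graph G \<Longrightarrow> finite {S. subgraph S G}"
proof -
  assume G: "wf_graph G"
  then have "finite (snd G)"
    unfolding wf_graph_def by (meson Pow_iff finite_Pow_iff rev_finite_subset subsetI)
  with G have "finite (Pow (fst G) \<times> Pow (snd G))"
    by (simp add: wf_graph_def)
  moreover have "{S. subgraph S G} \<subseteq> Pow (fst G) \<times> Pow (snd G)"
    by (auto simp: subgraph_def)
  ultimately show ?thesis
    by (rule rev_finite_subset)
qed

lemma finite_isomorphic_subgraphs: "wf_graph G \<Longrightarrow> finite {S. subgraph S G \<and> graph_iso S H}"
  by (rule rev_finite_subset[OF finite_subgraphs]) auto

lemma inj_gmap: "inj h \<Longrightarrow> inj (gmap h)"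
proof (rule injI)
  fix S T assume h: "inj h" and eq: "gmap h S = gmap h T"
  have "inj (image h)"
    using h by (simp add: inj_def inj_image_eq_iff)
  with eq h show "S = T"
    unfolding gmap_def by (simp add: inj_image_eq_iff prod_eq_iff)
qed

lemma doubleton_in_image_image_iff:
  assumes "inj h"
  shows "{h x, h y} \<in> image h ` E \<longleftrightarrow> {x, y} \<in> E"
proof -
  have "inj (image h)"
    using assms by (simp add: inj_def inj_image_eq_iff)
  then show ?thesis
    using inj_image_mem_iff[of "image h" "{x, y}" E] by simp
qed

lemma graph_iso_sym:
  assumes "graph_iso G1 G2"
  shows "graph_iso G2 G1"
proof -
  obtain f where f: "bij_betw f (fst G1) (fst G2)"
    and edges: "\<forall>x\<in>fst G1. \<forall>y\<in>fst G1. {x, y} \<in> snd G1 \<longleftrightarrow> {f x, f y} \<in> snd G2"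
    using assms unfolding graph_iso_def by blast
  let ?g = "inv_into (fst G1) f"
  have g: "bij_betw ?g (fst G2) (fst G1)"
    by (rule bij_betw_inv_into[OF f])
  have "{x, y} \<in> snd G2 \<longleftrightarrow> {?g x, ?g y} \<in> snd G1" if "x \<in> fst G2" "y \<in> fst G2" for x y
    using that edges bij_betw_apply[OF g] f by (simp add: bij_betw_inv_into_right)
  with g show ?thesis
    unfolding graph_iso_def by blast
qed

lemma graph_iso_trans:
  assumes "graph_iso G1 G2" and "graph_iso G2 G3"
  shows "graph_iso G1 G3"
proof -
  obtain f where f: "bij_betw f (fst G1) (fst G2)"
    and f_edges: "\<forall>x\<in>fst G1. \<forall>y\<in>fst G1. {x, y} \<in> snd G1 \<longleftrightarrow> {f x, f y} \<in> snd G2"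
    using assms(1) unfolding graph_iso_def by blast
  obtain g where g: "bij_betw g (fst G2) (fst G3)"
    and g_edges: "\<forall>x\<in>fst G2. \<forall>y\<in>fst G2. {x, y} \<in> snd G2 \<longleftrightarrow> {g x, g y} \<in> snd G3"
    using assms(2) unfolding graph_iso_def by blast
  have "{x, y} \<in> snd G1 \<longleftrightarrow> {(g \<circ> f) x, (g \<circ> f) y} \<in> snd G3"
    if "x \<in> fst G1" "y \<in> fst G1" for x y
    using that f_edges g_edges bij_betw_apply[OF f] by simp
  with bij_betw_trans[OF f g] show ?thesis
    unfolding graph_iso_def by blast
qed

lemma graph_iso_gmap:
  assumes "inj h"
  shows "graph_iso G (gmap h G)"
  unfolding graph_iso_def gmap_def fst_conv snd_conv
proof (intro exI conjI)
  show "bij_betw h (fst G) (h ` fst G)"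
    using inj_on_subset[OF assms subset_UNIV] by (rule inj_on_imp_bij_betw)
  show "\<forall>x\<in>fst G. \<forall>y\<in>fst G. {x, y} \<in> snd G \<longleftrightarrow> {h x, h y} \<in> image h ` snd G"
    by (simp add: doubleton_in_image_image_iff[OF assms])
qed

lemma graph_iso_gmap_iff:
  assumes "inj h"
  shows "graph_iso (gmap h S) F \<longleftrightarrow> graph_iso S F"
  using graph_iso_trans[OF graph_iso_gmap[OF assms]]
    graph_iso_trans[OF graph_iso_sym[OF graph_iso_gmap[OF assms]]]
  by blast

lemma graph_iso_nonempty: "graph_iso S F \<Longrightarrow> fst F \<noteq> {} \<Longrightarrow> fst S \<noteq> {}"
  unfolding graph_iso_def by (auto simp: bij_betw_def)

lemma subgraph_gmap: "inj h \<Longrightarrow> subgraph S G \<Longrightarrow> subgraph (gmap h S) (gmap h G)"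
  unfolding subgraph_def using wf_graph_gmap[of h S] by (auto simp: gmap_def)

lemma subgraph_gmapE:
  assumes h: "inj h" and G: "wf_graph G" and S: "subgraph S (gmap h G)"
  obtains S' where "subgraph S' G" and "S = gmap h S'"
proof
  let ?S' = "gmap (inv h) S"
  have wf: "wf_graph S" and V: "fst S \<subseteq> h ` fst G" and E: "snd S \<subseteq> image h ` snd G"
    using S by (auto simp: subgraph_def gmap_def)
  have V': "inv h ` fst S \<subseteq> fst G" and E': "image (inv h) ` snd S \<subseteq> snd G"
    using V E by (auto simp: inv_f_f[OF h] image_inv_f_f[OF h])
  have "wf_graph ?S'"
  proof -
    have "card (inv h ` e) = 2" if "e \<in> snd S" for e
      using that E G by (auto simp: image_inv_f_f[OF h] wf_graph_def)
    with wf show ?thesis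
      by (auto simp: wf_graph_def gmap_def)
  qed
  with V' E' show "subgraph ?S' G"
    by (simp add: subgraph_def gmap_def)
  have cancel: "h (inv h z) = z" if "z \<in> fst S" for z
    using that V by (blast intro: f_inv_into_f)
  have cancel_set: "h ` inv h ` A = A" if "A \<subseteq> fst S" for A
    using that cancel by (simp add: subset_iff image_image cong: image_cong)
  have "\<And>e. e \<in> snd S \<Longrightarrow> e \<subseteq> fst S"
    using wf by (auto simp: wf_graph_def)
  then have "image h ` image (inv h) ` snd S = snd S"
    using cancel_set by (simp add: image_comp o_def cong: image_cong)
  then show "S = gmap h ?S'"
    by (simp add: gmap_def cancel_set prod_eq_iff)
qed

lemma subgraph_gunion_left: "subgraph S (gmap (shift 0) G1) \<Longrightarrow> subgraph S (gunion G1 G2)"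
  unfolding subgraph_def gunion_shift by auto

lemma subgraph_gunion_right: "subgraph S (gmap (shift 1) G2) \<Longrightarrow> subgraph S (gunion G1 G2)"
  unfolding subgraph_def gunion_shift by auto

abbreviation adjacent :: "graph \<Rightarrow> nat \<Rightarrow> nat \<Rightarrow> bool" where
  "adjacent G \<equiv> \<lambda>a b. {a, b} \<in> snd G"

lemma rtranclp_adjacent_if_graph_iso_connected:
  assumes iso: "graph_iso S F" and F: "connected_graph F" and x: "x \<in> fst S" and y: "y \<in> fst S"
  shows "(adjacent S)\<^sup>*\<^sup>* x y"
proof -
  obtain g where g: "bij_betw g (fst F) (fst S)"
    and edges: "\<forall>a\<in>fst F. \<forall>b\<in>fst F. {a, b} \<in> snd F \<longleftrightarrow> {g a, g b} \<in> snd S"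
    using graph_iso_sym[OF iso] unfolding graph_iso_def by blast
  have wf: "wf_graph F"
    using F by (simp add: connected_graph_def)
  have path: "(adjacent S)\<^sup>*\<^sup>* (g a) (g c)"
    if "(adjacent F)\<^sup>*\<^sup>* a c" and "a \<in> fst F" for a c
    using that
  proof (induction rule: rtranclp_induct)
    case (step b c)
    then have "b \<in> fst F" "c \<in> fst F"
      using wf rtranclp.rtrancl_into_rtrancl[OF step(1,2)]
      by (auto simp: wf_graph_def dest!: bspec[of _ _ "{b, c}"])
    with step show ?case
      using edges by (meson rtranclp.rtrancl_into_rtrancl)
  qed simp
  obtain a c where "a \<in> fst F" "c \<in> fst F" "x = g a" "y = g c"
    using g x y by (metis bij_betw_imp_surj_on imageE)
  with F path show ?thesis
    by (simp add: connected_graph_def)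
qed

lemma gunion_edge_parity:
  assumes "{a, b} \<in> snd (gunion G1 G2)"
  shows "a mod 2 = b mod 2"
proof -
  obtain c e where "{a, b} = shift c ` e"
    using assms unfolding gunion_shift gmap_def by auto
  then have "a \<in> shift c ` e" "b \<in> shift c ` e"
    by (metis insertI1 insert_commute)+
  then show ?thesis
    by auto
qed

lemma gunion_path_parity:
  assumes "(adjacent S)\<^sup>*\<^sup>* x y" and "snd S \<subseteq> snd (gunion G1 G2)"
  shows "x mod 2 = y mod 2"
  using assms by (induction rule: rtranclp_induct) (auto dest: gunion_edge_parity)

lemma subgraph_gunion_side:
  assumes S: "subgraph S (gunion G1 G2)" and parity: "\<forall>v\<in>fst S. v mod 2 = c"
    and c: "c = 0 \<and> G = G1 \<or> c = 1 \<and> G = G2"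
  shows "subgraph S (gmap (shift c) G)"
proof -
  have V: "fst S \<subseteq> fst (gmap (shift 0) G1) \<union> fst (gmap (shift 1) G2)"
    and E: "snd S \<subseteq> snd (gmap (shift 0) G1) \<union> snd (gmap (shift 1) G2)"
    using S unfolding subgraph_def gunion_shift by auto
  have meets: "e \<inter> fst S \<noteq> {}" if "e \<in> snd S" for e
  proof -
    have "e \<subseteq> fst S" "card e = 2"
      using that S by (auto simp: subgraph_def wf_graph_def)
    then show ?thesis
      by (metis Int_absorb2 card.empty zero_neq_numeral)
  qed
  have other_side: "v \<notin> shift (1 - c) ` A" if "v \<in> fst S" for v A
  proof
    assume "v \<in> shift (1 - c) ` A"
    then have "v mod 2 = (1 - c) mod 2"
      by auto
    with that parity c show False
      by auto
  qed
  have "fst S \<subseteq> fst (gmap (shift c) G)"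
  proof
    fix v assume v: "v \<in> fst S"
    then have "v \<in> shift 0 ` fst G1 \<union> shift 1 ` fst G2"
      using V by (auto simp: gmap_def)
    with c other_side[OF v, of "fst G1"] other_side[OF v, of "fst G2"]
    show "v \<in> fst (gmap (shift c) G)"
      by (auto simp: gmap_def)
  qed
  moreover have "snd S \<subseteq> snd (gmap (shift c) G)"
  proof
    fix e assume e: "e \<in> snd S"
    show "e \<in> snd (gmap (shift c) G)"
    proof (rule ccontr)
      assume "e \<notin> snd (gmap (shift c) G)"
      with E e c obtain e' where "e = shift (1 - c) ` e'"
        by (auto simp: gmap_def)
      with meets[OF e] other_side show False
        by blast
    qed
  qed
  ultimately show ?thesis
    using S by (simp add: subgraph_def)
qed

lemma connected_subgraph_gunionE:
  assumes G1: "wf_graph G1" and G2: "wf_graph G2" and S: "subgraph S (gunion G1 G2)"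
    and iso: "graph_iso S F" and F: "connected_graph F"
  obtains c G S' where "c = 0 \<and> G = G1 \<or> c = 1 \<and> G = G2"
    and "subgraph S' G" and "graph_iso S' F" and "S = gmap (shift c) S'"
proof -
  obtain x0 where x0: "x0 \<in> fst S"
    using graph_iso_nonempty[OF iso] F by (auto simp: connected_graph_def)
  define c where "c = x0 mod 2"
  define G where "G = (if c = 0 then G1 else G2)"
  have c: "c = 0 \<and> G = G1 \<or> c = 1 \<and> G = G2"
    by (auto simp: c_def G_def)
  have "v mod 2 = c" if "v \<in> fst S" for v
  proof -
    have "snd S \<subseteq> snd (gunion G1 G2)"
      using S by (simp add: subgraph_def)
    with gunion_path_parity[OF rtranclp_adjacent_if_graph_iso_connected[OF iso F x0 that]]
    show ?thesis
      by (simp add: c_def)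
  qed
  then have "subgraph S (gmap (shift c) G)"
    using subgraph_gunion_side[OF S _ c] by blast
  moreover have "wf_graph G"
    using G1 G2 by (simp add: G_def)
  ultimately obtain S' where "subgraph S' G" "S = gmap (shift c) S'"
    using subgraph_gmapE[OF inj_shift] by blast
  with iso c that show ?thesis
    using graph_iso_gmap_iff[OF inj_shift] by metis
qed

lemma numsub_gunion_ge:
  assumes G1: "wf_graph G1" and G2: "wf_graph G2" and H: "fst H \<noteq> {}"
  shows "numsub H G1 + numsub H G2 \<le> numsub H (gunion G1 G2)"
proof -
  define X where "X G = {S. subgraph S G \<and> graph_iso S H}" for G
  have fin: "finite (X G)" if "wf_graph G" for G
    unfolding X_def using that by (rule finite_isomorphic_subgraphs)
  have left: "gmap (shift 0) ` X G1 \<subseteq> X (gunion G1 G2)"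
    and right: "gmap (shift 1) ` X G2 \<subseteq> X (gunion G1 G2)"
    unfolding X_def
    using subgraph_gunion_left subgraph_gunion_right subgraph_gmap[OF inj_shift]
      graph_iso_gmap_iff[OF inj_shift] by blast+
  have disjoint: "gmap (shift 0) ` X G1 \<inter> gmap (shift 1) ` X G2 = {}"
  proof -
    have "fst (gmap (shift 0) A) \<noteq> fst (gmap (shift 1) B)" if B: "B \<in> X G2" for A B
    proof -
      obtain b where "b \<in> fst B"
        using B H graph_iso_nonempty unfolding X_def by blast
      then have "shift 1 b \<in> fst (gmap (shift 1) B) - fst (gmap (shift 0) A)"
        by (auto simp: gmap_def dest: arg_cong[where f = "\<lambda>n. n mod 2"])
      then show ?thesis
        by blast
    qed
    then show ?thesis
      by fastforce
  qed
  have "numsub H G1 + numsub H G2 = card (gmap (shift 0) ` X G1) + card (gmap (shift 1) ` X G2)"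
    unfolding numsub_def X_def
    by (simp add: card_image inj_on_subset[OF inj_gmap[OF inj_shift] subset_UNIV])
  also have "\<dots> = card (gmap (shift 0) ` X G1 \<union> gmap (shift 1) ` X G2)"
    using disjoint fin[OF wf_graph_gunion[OF G1 G2]] left right
    by (metis card_Un_disjoint rev_finite_subset)
  also have "\<dots> \<le> card (X (gunion G1 G2))"
    using left right fin[OF wf_graph_gunion[OF G1 G2]] by (intro card_mono) auto
  finally show ?thesis
    unfolding numsub_def X_def .
qed

lemma numsub_gunion_le:
  assumes G1: "wf_graph G1" and G2: "wf_graph G2" and F: "connected_graph F"
  shows "numsub F (gunion G1 G2) \<le> numsub F G1 + numsub F G2"
proof -
  define X where "X G = {S. subgraph S G \<and> graph_iso S F}" for G
  have fin: "finite (X G)" if "wf_graph G" for G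
    unfolding X_def using that by (rule finite_isomorphic_subgraphs)
  have "X (gunion G1 G2) \<subseteq> gmap (shift 0) ` X G1 \<union> gmap (shift 1) ` X G2"
  proof
    fix S assume "S \<in> X (gunion G1 G2)"
    then have "subgraph S (gunion G1 G2)" "graph_iso S F"
      by (simp_all add: X_def)
    then obtain c G S' where c: "c = 0 \<and> G = G1 \<or> c = 1 \<and> G = G2"
      and "subgraph S' G" "graph_iso S' F" and S: "S = gmap (shift c) S'"
      by (rule connected_subgraph_gunionE[OF G1 G2 _ _ F])
    then have "S' \<in> X G"
      by (simp add: X_def)
    with c S show "S \<in> gmap (shift 0) ` X G1 \<union> gmap (shift 1) ` X G2"
      by auto
  qed
  then have "card (X (gunion G1 G2)) \<le> card (gmap (shift 0) ` X G1 \<union> gmap (shift 1) ` X G2)"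
    using fin G1 G2 by (intro card_mono) auto
  also have "\<dots> \<le> card (gmap (shift 0) ` X G1) + card (gmap (shift 1) ` X G2)"
    by (rule card_Un_le)
  also have "\<dots> \<le> card (X G1) + card (X G2)"
    by (intro add_mono card_image_le fin G1 G2)
  finally show ?thesis
    unfolding numsub_def X_def .
qed

lemma connected_graph_complete: "u \<ge> 1 \<Longrightarrow> connected_graph (complete u)"
  unfolding connected_graph_def
proof (intro conjI ballI)
  assume "u \<ge> 1"
  then show "fst (complete u) \<noteq> {}"
    by (auto simp: complete_def)
  show "wf_graph (complete u)"
    by (rule wf_graph_complete)
  fix x y assume "x \<in> fst (complete u)" "y \<in> fst (complete u)"
  then have "x = y \<or> {x, y} \<in> snd (complete u)"
    by (auto simp: complete_def card_insert_if)
  then show "(adjacent (complete u))\<^sup>*\<^sup>* x y"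
    by auto
qed

lemma kcount_complete:
  assumes "u \<ge> 1"
  shows "kcount u (complete u) = 1"
proof -
  let ?K = "complete u"
  have "S = ?K" if sub: "subgraph S ?K" and iso: "graph_iso S ?K" for S
  proof -
    obtain f where f: "bij_betw f (fst S) {0..<u}"
      and edges: "\<forall>x\<in>fst S. \<forall>y\<in>fst S. {x, y} \<in> snd S \<longleftrightarrow> {f x, f y} \<in> snd ?K"
      using iso unfolding graph_iso_def by (auto simp: complete_def)
    have "fst S \<subseteq> {0..<u}" "card (fst S) = u"
      using sub bij_betw_same_card[OF f] by (auto simp: subgraph_def complete_def)
    then have V: "fst S = {0..<u}"
      by (simp add: card_subset_eq)
    have "e \<in> snd S" if "e \<in> snd ?K" for e
    proof -
      obtain x y where xy: "e = {x, y}" "x \<noteq> y" "x \<in> fst S" "y \<in> fst S"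
        using \<open>e \<in> snd ?K\<close> V by (auto simp: complete_def card_2_iff)
      then have "{f x, f y} \<in> snd ?K"
        using f by (auto simp: complete_def card_insert_if bij_betw_def inj_on_eq_iff)
      with edges xy show ?thesis
        by blast
    qed
    with sub V show ?thesis
      by (auto simp: subgraph_def complete_def prod_eq_iff)
  qed
  moreover have "graph_iso ?K ?K"
    unfolding graph_iso_def by (rule exI[of _ id]) auto
  ultimately have "{S. subgraph S ?K \<and> graph_iso S ?K} = {?K}"
    using wf_graph_complete by (auto simp: subgraph_def)
  then show ?thesis
    by (simp add: kcount_def numsub_def)
qed

lemma numsub_empty_graph:
  assumes "fst F \<noteq> {}"
  shows "numsub F ({}, {}) = 0"
proof -
  have "{S. subgraph S ({}, {}) \<and> graph_iso S F} = {}"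
    using graph_iso_nonempty[OF _ assms] by (force simp: subgraph_def)
  then show ?thesis
    unfolding numsub_def by (metis card.empty)
qed

lemma nonempty_if_numsub_pos: "numsub F G \<ge> 1 \<Longrightarrow> fst F \<noteq> {} \<Longrightarrow> fst G \<noteq> {}"
  unfolding numsub_def subgraph_def using graph_iso_nonempty
  by (metis (no_types, lifting) Collect_empty_eq card.empty not_one_le_zero subset_empty)

lemma numsub_copies_ge:
  assumes "wf_graph G" and "fst H \<noteq> {}"
  shows "q * numsub H G \<le> numsub H (copies q G)"
proof (induction q)
  case (Suc q)
  then show ?case
    using numsub_gunion_ge[OF assms(1) wf_graph_copies[OF assms(1)] assms(2), of q] by simp
qed simp

lemma numsub_copies_le:
  assumes "wf_graph G" and "connected_graph F"
  shows "numsub F (copies q G) \<le> q * numsub F G"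
proof (induction q)
  case 0
  then show ?case
    using assms(2) numsub_empty_graph by (simp add: connected_graph_def)
next
  case (Suc q)
  then show ?case
    using numsub_gunion_le[OF assms(1) wf_graph_copies[OF assms(1)] assms(2), of q] by simp
qed

lemma numsub_mixed_ge:
  assumes "wf_graph G" and "fst H \<noteq> {}"
  shows "q * numsub H G \<le> numsub H (mixed q G r u)"
  using numsub_copies_ge[OF assms, of q]
    numsub_gunion_ge[OF wf_graph_copies[OF assms(1)] wf_graph_copies[OF wf_graph_complete] assms(2)]
  unfolding mixed_def by (meson add_leE le_trans)

section \<open>The extremal function\<close>

definition admissible :: "nat \<Rightarrow> graph set \<Rightarrow> nat \<Rightarrow> graph \<Rightarrow> bool" where
  "admissible u \<F> p G \<longleftrightarrow> wf_graph G \<and> free \<F> G \<and> kcount u G = p"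

lemma numsub_le_ex_u: "admissible u \<F> p G \<Longrightarrow> enat (numsub H G) \<le> ex_u u p H \<F>"
  unfolding ex_u_def admissible_def by (rule Sup_upper) blast

lemma ex_u_le_enat: "(\<And>G. admissible u \<F> p G \<Longrightarrow> numsub H G \<le> B) \<Longrightarrow> ex_u u p H \<F> \<le> enat B"
  unfolding ex_u_def admissible_def by (rule Sup_least) auto

lemma ex_u_finite_le:
  assumes "0 \<le> c" and "\<And>G. admissible u \<F> p G \<Longrightarrow> real (numsub H G) \<le> c"
  obtains e where "ex_u u p H \<F> = enat e" and "real e \<le> c"
proof -
  have "ex_u u p H \<F> \<le> enat (nat \<lfloor>c\<rfloor>)"
    using assms(2) by (intro ex_u_le_enat) (meson le_nat_floor of_nat_le_iff)
  then obtain e where e: "ex_u u p H \<F> = enat e" "e \<le> nat \<lfloor>c\<rfloor>"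
    by (cases "ex_u u p H \<F>") auto
  then have "real e \<le> c"
    using assms(1) by linarith
  with e that show ?thesis
    by blast
qed

lemma ereal_le_ex_u_divide:
  assumes "admissible u \<F> p G" and "p \<ge> 1"
  shows "ereal (real (numsub H G) / real p) \<le> ereal_of_enat (ex_u u p H \<F>) / ereal (real p)"
proof -
  have "ereal (real (numsub H G)) \<le> ereal_of_enat (ex_u u p H \<F>)"
    using numsub_le_ex_u[OF assms(1), of H] by (simp flip: ereal_of_enat_le_iff)
  then have "ereal (real (numsub H G)) / ereal (real p) \<le> ereal_of_enat (ex_u u p H \<F>) / ereal (real p)"
    by (rule ereal_divide_right_mono) (use assms(2) in simp)
  then show ?thesis
    using assms(2) by (simp add: ereal_divide)
qed

locale connected_forbidden =
  fixes u :: nat and \<F> :: "graph set"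
  assumes u_pos: "u \<ge> 1"
    and forbidden: "\<forall>F\<in>\<F>. connected_graph F \<and> numsub F (complete u) = 0"
begin

lemma complete_nonempty: "fst (complete u) \<noteq> {}"
  using connected_graph_complete[OF u_pos] by (simp add: connected_graph_def)

lemma free_gunion:
  assumes "wf_graph G1" "wf_graph G2" "free \<F> G1" "free \<F> G2"
  shows "free \<F> (gunion G1 G2)"
  using numsub_gunion_le[OF assms(1,2)] forbidden assms(3,4) by (fastforce simp: free_def)

lemma free_copies:
  assumes "wf_graph G" "free \<F> G"
  shows "free \<F> (copies q G)"
  using numsub_copies_le[OF assms(1)] forbidden assms(2) by (fastforce simp: free_def)

lemma free_complete: "free \<F> (complete u)"
  using forbidden by (simp add: free_def)

lemma kcount_gunion:
  assumes "wf_graph G1" "wf_graph G2"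
  shows "kcount u (gunion G1 G2) = kcount u G1 + kcount u G2"
  using numsub_gunion_le[OF assms connected_graph_complete[OF u_pos]]
    numsub_gunion_ge[OF assms complete_nonempty]
  unfolding kcount_def by (rule antisym)

lemma kcount_copies:
  assumes "wf_graph G"
  shows "kcount u (copies q G) = q * kcount u G"
  using numsub_copies_le[OF assms connected_graph_complete[OF u_pos]]
    numsub_copies_ge[OF assms complete_nonempty]
  unfolding kcount_def by (rule antisym)

lemma admissible_copies:
  "admissible u \<F> p G \<Longrightarrow> admissible u \<F> (q * p) (copies q G)"
  unfolding admissible_def using wf_graph_copies free_copies kcount_copies by simp

lemma admissible_mixed:
  assumes "admissible u \<F> p G"
  shows "admissible u \<F> (q * p + r) (mixed q G r u)"
proof -
  have "admissible u \<F> r (copies r (complete u))"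
    using admissible_copies[of 1 "complete u" r] wf_graph_complete free_complete kcount_complete[OF u_pos]
    by (simp add: admissible_def)
  with admissible_copies[OF assms, of q] show ?thesis
    unfolding admissible_def mixed_def by (simp add: wf_graph_gunion free_gunion kcount_gunion)
qed

lemma admissible_exists: "\<exists>G. admissible u \<F> p G"
proof -
  have "free \<F> ({}, {})"
    using forbidden numsub_empty_graph by (auto simp: free_def connected_graph_def)
  then have "admissible u \<F> 0 ({}, {})"
    using wf_graph_empty numsub_empty_graph[OF complete_nonempty]
    by (simp add: admissible_def kcount_def)
  then have "admissible u \<F> p (mixed 0 ({}, {}) p u)"
    using admissible_mixed[of 0 "({}, {})" 0 p] by simp
  then show ?thesis
    by (rule exI)
qed

lemma admissible_gt_if_ex_u_divide_gt:
  assumes p: "p \<ge> 1" and a: "a < ereal_of_enat (ex_u u p H \<F>) / ereal (real p)"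
  obtains G where "admissible u \<F> p G" and "a < ereal (real (numsub H G) / real p)"
proof -
  have "\<exists>G. admissible u \<F> p G \<and> a < ereal (real (numsub H G) / real p)"
  proof (rule ccontr)
    assume none: "\<not> ?thesis"
    have le: "ereal (real (numsub H G) / real p) \<le> a" if "admissible u \<F> p G" for G
      using none that leI by blast
    obtain G0 where "admissible u \<F> p G0"
      using admissible_exists by blast
    from le[OF this] have "0 \<le> a"
      by (rule order_trans[rotated]) simp
    moreover have "a \<noteq> \<infinity>"
      using a by auto
    ultimately obtain r where r: "a = ereal r" "0 \<le> r"
      by (cases a) auto
    have "real (numsub H G) \<le> r * real p" if "admissible u \<F> p G" for G
      using le[OF that] r p by (simp add: divide_le_eq)
    moreover have "0 \<le> r * real p"
      using r by simp
    ultimately obtain e where "ex_u u p H \<F> = enat e" "real e \<le> r * real p"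
      using ex_u_finite_le by metis
    with a r p show False
      by (simp add: ereal_divide less_divide_eq)
  qed
  with that show ?thesis
    by blast
qed

lemma eventually_ex_u_divide_gt:
  assumes H: "fst H \<noteq> {}" and G: "admissible u \<F> n G" and n: "n \<ge> 1"
    and a: "a < ereal (real (numsub H G) / real n)"
  shows "eventually (\<lambda>p. a < ereal_of_enat (ex_u u p H \<F>) / ereal (real p)) sequentially"
proof -
  let ?N = "real (numsub H G)"
  have "(\<lambda>p. ereal (?N * (real (p div n) / real p))) \<longlonglongrightarrow> ereal (?N / real n)"
    using tendsto_mult[OF tendsto_const tendsto_of_nat_div_over, of n ?N] n
    by (intro tendsto_ereal) simp
  then have "eventually (\<lambda>p. a < ereal (?N * (real (p div n) / real p))) sequentially"
    using a by (rule order_tendstoD)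
  then show ?thesis
    using eventually_ge_at_top[of 1]
  proof eventually_elim
    case (elim p)
    let ?G = "mixed (p div n) G (p mod n) u"
    have "admissible u \<F> p ?G"
      using admissible_mixed[OF G, of "p div n" "p mod n"] by simp
    then have "ereal (real (numsub H ?G) / real p) \<le> ereal_of_enat (ex_u u p H \<F>) / ereal (real p)"
      using elim(2) by (rule ereal_le_ex_u_divide)
    moreover have "real (p div n) * ?N \<le> real (numsub H ?G)"
      using numsub_mixed_ge[OF _ H, of G "p div n" "p mod n"] G
      by (metis admissible_def of_nat_le_iff of_nat_mult)
    then have "?N * (real (p div n) / real p) \<le> real (numsub H ?G) / real p"
      by (simp add: divide_right_mono mult.commute)
    ultimately show ?case
      using elim(1) by (meson ereal_less_eq(3) less_le_trans order_trans)
  qed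
qed

lemma ex_u_divide_tendsto_SUP:
  assumes "fst H \<noteq> {}"
  shows "(\<lambda>p. ereal_of_enat (ex_u u p H \<F>) / ereal (real p))
    \<longlonglongrightarrow> (SUP p\<in>{1..}. ereal_of_enat (ex_u u p H \<F>) / ereal (real p))"
proof (rule tendsto_SUP_if_eventually_gt)
  fix n a
  assume n: "n \<ge> 1" and "a < ereal_of_enat (ex_u u n H \<F>) / ereal (real n)"
  then obtain G where "admissible u \<F> n G" "a < ereal (real (numsub H G) / real n)"
    by (rule admissible_gt_if_ex_u_divide_gt)
  then show "eventually (\<lambda>p. a < ereal_of_enat (ex_u u p H \<F>) / ereal (real p)) sequentially"
    using eventually_ex_u_divide_gt[OF assms _ n] by blast
qed

lemma numsub_le_P_u:
  assumes H: "fst H \<noteq> {}" and P: "P_u u H \<F> = ereal c"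
    and G: "admissible u \<F> p G" and p: "p \<ge> 1"
  shows "real (numsub H G) \<le> c * real p"
proof -
  have "ereal (real (numsub H G) / real p) \<le> ereal_of_enat (ex_u u p H \<F>) / ereal (real p)"
    by (rule ereal_le_ex_u_divide[OF G p])
  also have "\<dots> \<le> (SUP p\<in>{1..}. ereal_of_enat (ex_u u p H \<F>) / ereal (real p))"
    using p by (intro SUP_upper) auto
  also have "\<dots> = ereal c"
    using limI[OF ex_u_divide_tendsto_SUP[OF H]] P by (simp add: P_u_def)
  finally show ?thesis
    using p by (simp add: divide_le_eq)
qed

lemma ex_u_le_P_u:
  assumes "fst H \<noteq> {}" and "P_u u H \<F> = ereal c" and "c \<ge> 0" and "p \<ge> 1"
  obtains e where "ex_u u p H \<F> = enat e" and "real e \<le> c * real p"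
proof (rule ex_u_finite_le)
  show "0 \<le> c * real p"
    using assms(3) by simp
  show "real (numsub H G) \<le> c * real p" if "admissible u \<F> p G" for G
    using numsub_le_P_u[OF assms(1,2) that assms(4)] .
qed

lemma ex_u_bounds_by_mixed:
  assumes H: "fst H \<noteq> {}" and L: "admissible u \<F> k L"
    and P: "P_u u H \<F> = ereal (real (numsub H L) / real k)" and p: "p \<ge> 1"
  shows "\<exists>e. ex_u u p H \<F> = enat e
    \<and> p div k * numsub H L \<le> numsub H (mixed (p div k) L (p mod k) u)
    \<and> numsub H (mixed (p div k) L (p mod k) u) \<le> e
    \<and> real e \<le> real (numsub H L) / real k * real p"
proof -
  obtain e where e: "ex_u u p H \<F> = enat e" "real e \<le> real (numsub H L) / real k * real p"
    by (rule ex_u_le_P_u[OF H P _ p]) simp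
  have "enat (numsub H (mixed (p div k) L (p mod k) u)) \<le> ex_u u (p div k * k + p mod k) H \<F>"
    by (rule numsub_le_ex_u[OF admissible_mixed[OF L]])
  moreover have "p div k * numsub H L \<le> numsub H (mixed (p div k) L (p mod k) u)"
    using L by (intro numsub_mixed_ge[OF _ H]) (simp add: admissible_def)
  ultimately show ?thesis
    using e by auto
qed

lemma ex_u_copies:
  assumes H: "fst H \<noteq> {}" and L: "admissible u \<F> k L"
    and P: "P_u u H \<F> = ereal (real (numsub H L) / real k)" and p: "p \<ge> 1" "k dvd p"
  shows "ex_u u p H \<F> = enat (numsub H (copies (p div k) L))"
proof -
  have wf: "wf_graph L" and pk: "p div k * k = p"
    using L p(2) by (auto simp: admissible_def)
  have "ex_u u p H \<F> \<le> enat (p div k * numsub H L)"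
  proof (rule ex_u_le_enat)
    fix G assume "admissible u \<F> p G"
    then have "real (numsub H G) \<le> real (numsub H L) / real k * real p"
      by (rule numsub_le_P_u[OF H P _ p(1)])
    also have "\<dots> = real (p div k * numsub H L)"
    proof -
      have "real p = real (p div k) * real k" "k \<noteq> 0"
        using pk p(1) by (metis of_nat_mult, metis mult_0_right not_one_le_zero)
      then show ?thesis
        by simp
    qed
    finally show "numsub H G \<le> p div k * numsub H L"
      by (simp only: of_nat_le_iff)
  qed
  moreover have "p div k * numsub H L \<le> numsub H (copies (p div k) L)"
    by (rule numsub_copies_ge[OF wf H])
  moreover have "enat (numsub H (copies (p div k) L)) \<le> ex_u u p H \<F>"
    using numsub_le_ex_u[OF admissible_copies[OF L]] pk by metis
  ultimately show ?thesis
    by (metis antisym enat_ord_simps(1) order_trans)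
qed

end

theorem mainTheorem6:
  fixes u :: nat and H L :: graph and \<F> :: "graph set"
  assumes u: "u \<ge> 1"
    and H: "wf_graph H" and HK: "numsub (complete u) H \<ge> 1"
    and F: "\<forall>F\<in>\<F>. connected_graph F \<and> numsub F (complete u) = 0"
    and L: "wf_graph L" "free \<F> L" "kcount u L \<ge> 1" "numsub H L \<ge> 1"
    and rhoL: "ereal (rho u H L) = P_u u H \<F>"
  shows "((\<lambda>p. ereal_of_enat (ex_u u p H \<F>) /
            ereal (real (numsub H (mixed (p div kcount u L) L (p mod kcount u L) u))))
          \<longlonglongrightarrow> 1) \<and>
         ((\<lambda>p. ereal_of_enat (ex_u u p H \<F>) /
            ereal (real (numsub H L) / real (kcount u L) * real p)) \<longlonglongrightarrow> 1) \<and>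
         (\<forall>p. p \<ge> 1 \<longrightarrow> kcount u L dvd p \<longrightarrow>
            ex_u u p H \<F> = enat (numsub H (copies (p div kcount u L) L)))"
proof -
  interpret connected_forbidden u \<F>
    using u F by unfold_locales
  define k where "k = kcount u L"
  have H_nonempty: "fst H \<noteq> {}"
    using nonempty_if_numsub_pos[OF HK complete_nonempty] .
  have L_admissible: "admissible u \<F> k L"
    using L by (simp add: admissible_def k_def)
  have P: "P_u u H \<F> = ereal (real (numsub H L) / real k)"
    using rhoL by (simp add: rho_def k_def)
  have "k \<ge> 1"
    using L by (simp add: k_def)
  from ereal_ratio_limits_of_bounds[OF this L(4) ex_u_bounds_by_mixed[OF H_nonempty L_admissible P]]
    ex_u_copies[OF H_nonempty L_admissible P]
  show ?thesis
    by (simp add: k_def)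
qed

end
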